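(* For every nondegenerate counterclockwise triangle $(A,B,C)$ there exists a unique hexagonal grid $\varphi$ with reference triangle $(A,B,C)$, i.e. with $\varphi(\{0,1\})=A$, $\varphi(\{1,\zeta\})=B$, $\varphi(\{\zeta,0\})=C$.
   Context: Let $\zeta=e^{i\pi/3}$ and $\Lambda=\{m+n\zeta: m,n\in\mathbb{Z}\}$. Call $p,q\in\Lambda$ adjacent if $|p-q|=1$, and let $\mathcal{E}$ be the set of unordered pairs $\{p,q\}$ of adjacent lattice points. A hexagonal grid is a map $\varphi:\mathcal{E}\to\mathbb{C}$ such that for every $p\in\Lambda$ there exist $c_p,r_p\in\mathbb{C}$ with $\varphi(\{p,p+\zeta^k\})=c_p+r_p\zeta^k$ for $k=0,\dots,5$. Thus the six points form a regular, possibly degenerate, hexagon $H_p$ listed counterclockwise. For each set $\{p,q,s\}\subset\Lambda$ of three pairwise adjacent lattice points listed counterclockwise, the corresponding triangle of the grid is $(\varphi(\{p,q\}),\varphi(\{q,s\}),\varphi(\{s,p\}))$. The reference triangle of $\varphi$ is $(\varphi(\{0,1\}),\varphi(\{1,\zeta\}),\varphi(\{\zeta,0\}))$. When the reference triangle is counterclockwise and nondegenerate, the three hexagons $H_0,H_1,H_\zeta$ are the regular hexagons erected outwardly on its sides. The grid triangles sharing a vertex with the reference triangle are its flank triangles. *)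

theory Defs
  imports "HOL-Analysis.Analysis"
begin

definition zeta :: complex where
  "zeta = exp (\<i> * of_real (pi / 3))"

definition Lattice :: "complex set" where
  "Lattice = {of_int m + of_int n * zeta | m n. True}"

definition Edges :: "complex set set" where
  "Edges = {{p, q} | p q. p \<in> Lattice \<and> q \<in> Lattice \<and> cmod (p - q) = 1}"

text \<open>A hexagonal grid: values on edges are only relevant on Edges.\<close>
definition hex_grid :: "(complex set \<Rightarrow> complex) \<Rightarrow> bool" where
  "hex_grid \<phi> \<longleftrightarrow> (\<forall>p\<in>Lattice. \<exists>c r. \<forall>k::nat<6. \<phi> {p, p + zeta ^ k} = c + r * zeta ^ k)"

definition has_reference_triangle :: "(complex set \<Rightarrow> complex) \<Rightarrow> complex \<Rightarrow> complex \<Rightarrow> complex \<Rightarrow> bool" where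
  "has_reference_triangle \<phi> A B C \<longleftrightarrow>
     \<phi> {0, 1} = A \<and> \<phi> {1, zeta} = B \<and> \<phi> {zeta, 0} = C"

text \<open>Nondegenerate counterclockwise: positive signed area.\<close>
definition ccw_nondegenerate :: "complex \<Rightarrow> complex \<Rightarrow> complex \<Rightarrow> bool" where
  "ccw_nondegenerate A B C \<longleftrightarrow> Im (cnj (B - A) * (C - A)) > 0"

end

theory Submission
  imports Defs
begin

text \<open>
  On every lattice point the six edge values of a grid depend affinely on the direction, so a grid
  is pinned down at a vertex by two of its edges. Walking from the reference triangle, where two
  edges are known at both 0 and 1, this agreement spreads to every lattice point, which gives
  uniqueness. For existence, \<open>{p, q} \<mapsto> c + r (p + q) + s p q\<close> is a grid for any constants,
  since at \<open>p\<close> it equals \<open>(c + 2 r p + s p\<^sup>2) + (r + s p) u\<close> on the edge \<open>{p, p + u}\<close>; its three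
  free constants can be fitted to the reference triangle.
\<close>

lemma zeta_eq_Complex: "zeta = Complex (1/2) (sqrt 3 / 2)"
proof -
  have "zeta = cis (pi/3)" unfolding zeta_def by (simp add: cis_conv_exp mult.commute)
  also have "\<dots> = Complex (1/2) (sqrt 3 / 2)" by (simp add: cis.ctr cos_60 sin_60)
  finally show ?thesis .
qed

lemma zeta_squared: "zeta\<^sup>2 = zeta - 1"
  unfolding zeta_eq_Complex by (simp add: complex_eq_iff power2_eq_square field_simps)

lemma zeta_powers: "zeta ^ 3 = -1" "zeta ^ 4 = -zeta" "zeta ^ 5 = 1 - zeta"
proof -
  have sq: "zeta * zeta = zeta - 1" using zeta_squared by (simp add: power2_eq_square)
  have "zeta ^ 3 = zeta * (zeta * zeta)" by (simp add: power3_eq_cube)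
  also have "\<dots> = zeta * zeta - zeta" by (simp add: sq right_diff_distrib)
  finally show z3: "zeta ^ 3 = -1" by (simp add: sq)
  have "zeta ^ 4 = zeta * zeta ^ 3" by (simp add: numeral_eq_Suc)
  then show z4: "zeta ^ 4 = -zeta" by (simp add: z3)
  have "zeta ^ 5 = zeta * zeta ^ 4" by (simp add: numeral_eq_Suc)
  then show "zeta ^ 5 = 1 - zeta" by (simp add: z4 sq)
qed

lemma zeta_neq: "zeta \<noteq> 0" "zeta \<noteq> 1"
  unfolding zeta_eq_Complex by (auto simp: complex_eq_iff)

definition hex_units :: "complex set" where
  "hex_units = (\<lambda>k. zeta ^ k) ` {..<6}"

lemma hex_units_eq: "hex_units = {1, zeta, zeta - 1, -1, -zeta, 1 - zeta}"
proof -
  have "{..<6::nat} = {0, 1, 2, 3, 4, 5}" by auto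
  then show ?thesis unfolding hex_units_def by (simp add: zeta_squared zeta_powers)
qed

lemma uminus_hex_units: "u \<in> hex_units \<Longrightarrow> -u \<in> hex_units"
  unfolding hex_units_eq by auto

lemma zero_notin_hex_units: "0 \<notin> hex_units"
  unfolding hex_units_eq using zeta_neq by auto

lemma hex_grid_iff:
  "hex_grid \<phi> \<longleftrightarrow> (\<forall>p\<in>Lattice. \<exists>c r. \<forall>u\<in>hex_units. \<phi> {p, p + u} = c + r * u)"
  unfolding hex_grid_def hex_units_def by (simp add: lessThan_def)

lemma Lattice_add: "p \<in> Lattice \<Longrightarrow> q \<in> Lattice \<Longrightarrow> p + q \<in> Lattice"
proof -
  assume "p \<in> Lattice" "q \<in> Lattice"
  then obtain m n m' n' where "p = of_int m + of_int n * zeta" "q = of_int m' + of_int n' * zeta"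
    unfolding Lattice_def by blast
  then have "p + q = of_int (m + m') + of_int (n + n') * zeta" by (simp add: algebra_simps)
  then show ?thesis unfolding Lattice_def by blast
qed

lemma Lattice_uminus: "p \<in> Lattice \<Longrightarrow> -p \<in> Lattice"
proof -
  assume "p \<in> Lattice"
  then obtain m n where "p = of_int m + of_int n * zeta" unfolding Lattice_def by blast
  then have "-p = of_int (-m) + of_int (-n) * zeta" by simp
  then show ?thesis unfolding Lattice_def by blast
qed

lemma Lattice_diff: "p \<in> Lattice \<Longrightarrow> q \<in> Lattice \<Longrightarrow> p - q \<in> Lattice"
  using Lattice_add[of p "-q"] Lattice_uminus[of q] by simp

lemma hex_units_subset_Lattice: "hex_units \<subseteq> Lattice"
proof -
  have "1 = of_int 1 + of_int 0 * zeta" "zeta = of_int 0 + of_int 1 * zeta" by simp_all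
  then have "1 \<in> Lattice" "zeta \<in> Lattice" unfolding Lattice_def by blast+
  then show ?thesis
    unfolding hex_units_eq using Lattice_uminus Lattice_diff by auto
qed

lemma Lattice_add_hex_unit: "p \<in> Lattice \<Longrightarrow> u \<in> hex_units \<Longrightarrow> p + u \<in> Lattice"
  using Lattice_add hex_units_subset_Lattice by blast

lemma cmod_Lattice_point_squared:
  "(cmod (of_int m + of_int n * zeta))\<^sup>2 = of_int (m\<^sup>2 + m * n + n\<^sup>2)"
proof -
  let ?z = "of_int m + of_int n * zeta"
  have re: "Re ?z = m + n / 2" and im: "Im ?z = n * sqrt 3 / 2"
    unfolding zeta_eq_Complex by simp_all
  have "(cmod ?z)\<^sup>2 = (m + n / 2)\<^sup>2 + (n * sqrt 3 / 2)\<^sup>2"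
    unfolding cmod_power2 re im ..
  also have "\<dots> = of_int (m\<^sup>2 + m * n + n\<^sup>2)"
    by (simp add: power_mult_distrib power_divide power2_eq_square field_simps)
  finally show ?thesis .
qed

lemma int_norm_form_eq_1:
  fixes m n :: int
  assumes "m\<^sup>2 + m * n + n\<^sup>2 = 1"
  shows "(m, n) \<in> {(1, 0), (0, 1), (-1, 1), (-1, 0), (0, -1), (1, -1)}"
proof -
  have "(2 * m + n)\<^sup>2 + 3 * n\<^sup>2 = 4" "(2 * n + m)\<^sup>2 + 3 * m\<^sup>2 = 4"
    using assms by (simp_all add: power2_eq_square algebra_simps)
  then have "n\<^sup>2 \<le> 1" "m\<^sup>2 \<le> 1"
    using zero_le_power2[of "2 * m + n"] zero_le_power2[of "2 * n + m"] by linarith+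
  then have "m \<in> {-1, 0, 1}" "n \<in> {-1, 0, 1}" unfolding abs_square_le_1 by auto
  then show ?thesis using assms by (auto simp: power2_eq_square)
qed

lemma Lattice_dist_1_imp_hex_unit:
  assumes "p \<in> Lattice" "q \<in> Lattice" "cmod (p - q) = 1"
  shows "q - p \<in> hex_units"
proof -
  obtain m n where mn: "q - p = of_int m + of_int n * zeta"
    using Lattice_diff[OF assms(2,1)] unfolding Lattice_def by blast
  have "cmod (q - p) = 1" using assms(3) by (simp add: norm_minus_commute)
  then have "of_int (m\<^sup>2 + m * n + n\<^sup>2) = (1::real)"
    using cmod_Lattice_point_squared[of m n] mn by simp
  then have "(m, n) \<in> {(1, 0), (0, 1), (-1, 1), (-1, 0), (0, -1), (1, -1)}"
    by (intro int_norm_form_eq_1) (simp only: of_int_eq_1_iff)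
  then show ?thesis unfolding mn hex_units_eq by auto
qed

lemma Lattice_induct [consumes 1, case_names zero step]:
  assumes "p \<in> Lattice" and "P 0"
    and step: "\<And>q. q \<in> Lattice \<Longrightarrow> P q \<Longrightarrow> P (q + 1) \<and> P (q - 1) \<and> P (q + zeta) \<and> P (q - zeta)"
  shows "P p"
proof -
  let ?pt = "\<lambda>m n. of_int m + of_int n * zeta :: complex"
  have pt_in: "?pt m n \<in> Lattice" for m n unfolding Lattice_def by blast
  have column: "P (?pt 0 n)" for n
  proof (induction n rule: int_induct[where k = 0])
    case (step1 i) then show ?case using step[OF pt_in[of 0 i]] by (simp add: algebra_simps)
  next
    case (step2 i) then show ?case using step[OF pt_in[of 0 i]] by (simp add: algebra_simps)
  qed (simp add: \<open>P 0\<close>)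
  have "P (?pt m n)" for m n
  proof (induction m rule: int_induct[where k = 0])
    case (step1 i) then show ?case using step[OF pt_in[of i n]] by (simp add: algebra_simps)
  next
    case (step2 i) then show ?case using step[OF pt_in[of i n]] by (simp add: algebra_simps)
  qed (use column in simp)
  then show ?thesis using \<open>p \<in> Lattice\<close> unfolding Lattice_def by blast
qed

lemma affine_eq_at_two_points:
  fixes c r c' r' u u' :: "'a::field"
  assumes "c + r * u = c' + r' * u" "c + r * u' = c' + r' * u'" "u \<noteq> u'"
  shows "c = c'" "r = r'"
proof -
  have "(r - r') * (u - u') = (c + r * u) - (c + r * u') - ((c' + r' * u) - (c' + r' * u'))"
    by (simp add: algebra_simps)
  then have "(r - r') * (u - u') = 0" using assms(1,2) by simp
  then show "r = r'" using assms(3) by simp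
  then show "c = c'" using assms(1) by simp
qed

definition agree_at :: "(complex set \<Rightarrow> complex) \<Rightarrow> (complex set \<Rightarrow> complex) \<Rightarrow> complex \<Rightarrow> bool" where
  "agree_at \<psi> \<phi> p \<longleftrightarrow> (\<forall>u\<in>hex_units. \<psi> {p, p + u} = \<phi> {p, p + u})"

lemma hex_grids_agree_at_of_two_edges:
  assumes "hex_grid \<psi>" "hex_grid \<phi>" "p \<in> Lattice" "u \<in> hex_units" "u' \<in> hex_units" "u \<noteq> u'"
    and "\<psi> {p, p + u} = \<phi> {p, p + u}" "\<psi> {p, p + u'} = \<phi> {p, p + u'}"
  shows "agree_at \<psi> \<phi> p"
proof -
  obtain c r where \<psi>: "\<forall>w\<in>hex_units. \<psi> {p, p + w} = c + r * w"
    using assms(1,3) unfolding hex_grid_iff by blast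
  obtain c' r' where \<phi>: "\<forall>w\<in>hex_units. \<phi> {p, p + w} = c' + r' * w"
    using assms(2,3) unfolding hex_grid_iff by blast
  have "c + r * u = c' + r' * u" "c + r * u' = c' + r' * u'"
    using assms(4,5,7,8) \<psi> \<phi> by (metis, metis)
  then have "c = c'" "r = r'" using affine_eq_at_two_points[OF _ _ assms(6)] by blast+
  then show ?thesis unfolding agree_at_def using \<psi> \<phi> by simp
qed

lemma agree_at_of_two_neighbours:
  assumes "hex_grid \<psi>" "hex_grid \<phi>" "p \<in> Lattice" "a - p \<in> hex_units" "b - p \<in> hex_units" "a \<noteq> b"
    and "agree_at \<psi> \<phi> a" "agree_at \<psi> \<phi> b"
  shows "agree_at \<psi> \<phi> p"
proof -
  have edge: "\<psi> {p, p + (x - p)} = \<phi> {p, p + (x - p)}"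
    if "x - p \<in> hex_units" "agree_at \<psi> \<phi> x" for x
  proof -
    have "\<psi> {x, x + - (x - p)} = \<phi> {x, x + - (x - p)}"
      using that uminus_hex_units unfolding agree_at_def by blast
    then show ?thesis by (simp add: insert_commute)
  qed
  show ?thesis
    by (rule hex_grids_agree_at_of_two_edges[OF assms(1-5) _ edge edge])
      (use assms(4-8) in simp_all)
qed

text \<open>Each new vertex is a common neighbour of two vertices where agreement is already known.\<close>

lemma agree_at_edge_spreads:
  assumes grids: "hex_grid \<psi>" "hex_grid \<phi>" and q: "q \<in> Lattice"
    and "agree_at \<psi> \<phi> q" "agree_at \<psi> \<phi> (q + 1)"
  shows "agree_at \<psi> \<phi> (q + zeta) \<and> agree_at \<psi> \<phi> (q + zeta + 1)"
    and "agree_at \<psi> \<phi> (q - zeta) \<and> agree_at \<psi> \<phi> (q - zeta + 1)"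
    and "agree_at \<psi> \<phi> (q + 1 + 1)"
    and "agree_at \<psi> \<phi> (q - 1)"
proof -
  note neighbours = agree_at_of_two_neighbours[OF grids]
  have units: "1 \<in> hex_units" "zeta \<in> hex_units" "-1 \<in> hex_units" "-zeta \<in> hex_units"
    unfolding hex_units_eq by simp_all
  have "q + zeta \<in> Lattice" "q - zeta \<in> Lattice"
    using Lattice_add_hex_unit[OF q units(2)] Lattice_add_hex_unit[OF q units(4)] by simp_all
  then have lattice: "q + zeta \<in> Lattice" "q + zeta + 1 \<in> Lattice" "q + 1 + 1 \<in> Lattice"
    "q - zeta \<in> Lattice" "q - zeta + 1 \<in> Lattice" "q - 1 \<in> Lattice"
    using Lattice_add_hex_unit[OF _ units(1)] Lattice_add_hex_unit[OF q units(3)]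
      Lattice_add_hex_unit[OF Lattice_add_hex_unit[OF q units(1)] units(1)]
    by simp_all
  have z: "agree_at \<psi> \<phi> (q + zeta)"
    by (rule neighbours[OF lattice(1) _ _ _ assms(4,5)]) (simp_all add: hex_units_eq zeta_neq)
  have z1: "agree_at \<psi> \<phi> (q + zeta + 1)"
    by (rule neighbours[OF lattice(2) _ _ _ z assms(5)]) (simp_all add: hex_units_eq zeta_neq)
  show "agree_at \<psi> \<phi> (q + 1 + 1)"
    by (rule neighbours[OF lattice(3) _ _ _ z1 assms(5)]) (simp_all add: hex_units_eq zeta_neq)
  have mz1: "agree_at \<psi> \<phi> (q - zeta + 1)"
    by (rule neighbours[OF lattice(5) _ _ _ assms(5,4)]) (simp_all add: hex_units_eq zeta_neq)
  have mz: "agree_at \<psi> \<phi> (q - zeta)"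
    by (rule neighbours[OF lattice(4) _ _ _ assms(4) mz1]) (simp_all add: hex_units_eq zeta_neq)
  show "agree_at \<psi> \<phi> (q - 1)"
    by (rule neighbours[OF lattice(6) _ _ _ assms(4) mz]) (simp_all add: hex_units_eq zeta_neq)
  show "agree_at \<psi> \<phi> (q + zeta) \<and> agree_at \<psi> \<phi> (q + zeta + 1)"
    "agree_at \<psi> \<phi> (q - zeta) \<and> agree_at \<psi> \<phi> (q - zeta + 1)"
    using z z1 mz mz1 by blast+
qed

lemma hex_grid_unique:
  assumes grids: "hex_grid \<psi>" "hex_grid \<phi>"
    and "has_reference_triangle \<psi> A B C" "has_reference_triangle \<phi> A B C"
    and "e \<in> Edges"
  shows "\<psi> e = \<phi> e"
proof -
  have ref: "\<psi> {0, 1} = \<phi> {0, 1}" "\<psi> {1, zeta} = \<phi> {1, zeta}" "\<psi> {0, zeta} = \<phi> {0, zeta}"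
    using assms(3,4) unfolding has_reference_triangle_def by (auto simp: insert_commute)
  have units: "1 \<in> hex_units" "zeta \<in> hex_units" "-1 \<in> hex_units" "zeta - 1 \<in> hex_units"
    unfolding hex_units_eq by simp_all
  have "1 \<in> Lattice" "0 \<in> Lattice"
    using hex_units_subset_Lattice units(1) Lattice_diff[of 1 1] by auto
  then have start: "agree_at \<psi> \<phi> 0 \<and> agree_at \<psi> \<phi> (0 + 1)"
    using hex_grids_agree_at_of_two_edges[OF grids \<open>0 \<in> Lattice\<close> units(1,2)]
      hex_grids_agree_at_of_two_edges[OF grids \<open>1 \<in> Lattice\<close> units(3,4)]
      ref zeta_neq by (simp add: insert_commute)
  have everywhere: "agree_at \<psi> \<phi> q \<and> agree_at \<psi> \<phi> (q + 1)" if "q \<in> Lattice" for q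
    using that
  proof (induction rule: Lattice_induct)
    case zero
    from start show ?case by simp
  next
    case (step q)
    then show ?case using agree_at_edge_spreads[OF grids, of q] by simp
  qed
  obtain p q where e: "e = {p, q}" "p \<in> Lattice" "q \<in> Lattice" "cmod (p - q) = 1"
    using \<open>e \<in> Edges\<close> unfolding Edges_def by blast
  have "\<psi> {p, p + (q - p)} = \<phi> {p, p + (q - p)}"
    using everywhere[OF e(2)] Lattice_dist_1_imp_hex_unit[OF e(2-4)] unfolding agree_at_def by blast
  then show ?thesis using e(1) by simp
qed

text \<open>Sum and product of the endpoints make \<open>c + r (p + q) + s p q\<close> a function of the unordered edge.\<close>

definition quadratic_grid :: "complex \<Rightarrow> complex \<Rightarrow> complex \<Rightarrow> complex set \<Rightarrow> complex" where
  "quadratic_grid c r s e = c + r * \<Sum>e + s * \<Prod>e"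

lemma quadratic_grid_edge: "p \<noteq> q \<Longrightarrow> quadratic_grid c r s {p, q} = c + r * (p + q) + s * p * q"
  unfolding quadratic_grid_def by simp

lemma hex_grid_quadratic_grid: "hex_grid (quadratic_grid c r s)"
  unfolding hex_grid_iff
proof
  fix p :: complex
  have "quadratic_grid c r s {p, p + u} = (c + 2 * r * p + s * p\<^sup>2) + (r + s * p) * u"
    if "u \<in> hex_units" for u
    using that zero_notin_hex_units
    by (subst quadratic_grid_edge) (auto simp: algebra_simps power2_eq_square)
  then show "\<exists>c' r'. \<forall>u\<in>hex_units. quadratic_grid c r s {p, p + u} = c' + r' * u" by blast
qed

lemma quadratic_grid_fits_reference_triangle:
  "\<exists>c r s. has_reference_triangle (quadratic_grid c r s) A B C"
proof -
  define r where "r = (A - C) / (1 - zeta)"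
  define c where "c = A - r"
  define s where "s = (B - c - r * (1 + zeta)) / zeta"
  have "c + r * zeta = A - r * (1 - zeta)" unfolding c_def by (simp add: algebra_simps)
  also have "\<dots> = C" unfolding r_def using zeta_neq(2) by simp
  finally have "quadratic_grid c r s {zeta, 0} = C"
    using zeta_neq(1) by (simp add: quadratic_grid_edge)
  moreover have "quadratic_grid c r s {0, 1} = A" unfolding c_def by (simp add: quadratic_grid_edge)
  moreover have "quadratic_grid c r s {1, zeta} = B"
    unfolding s_def using zeta_neq(1,2) by (simp add: quadratic_grid_edge field_simps)
  ultimately show ?thesis unfolding has_reference_triangle_def by blast
qed

theorem mainTheorem6:
  assumes "ccw_nondegenerate A B C"
  shows "\<exists>\<phi>. hex_grid \<phi> \<and> has_reference_triangle \<phi> A B C \<and>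
           (\<forall>\<psi>. hex_grid \<psi> \<and> has_reference_triangle \<psi> A B C \<longrightarrow> (\<forall>e\<in>Edges. \<psi> e = \<phi> e))"
proof -
  obtain c r s where "has_reference_triangle (quadratic_grid c r s) A B C"
    using quadratic_grid_fits_reference_triangle by blast
  then show ?thesis
    using hex_grid_quadratic_grid hex_grid_unique by blast
qed

end
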